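(* Let $\alpha,\rho>0$ and let $b_f:\mathbb R_+\to(0,\infty)$ be a bounded function decreasing to $0$ on $\mathbb R_+=[0,\infty)$ with $\int_0^\infty b_f(s)s^{d-1}\,ds<\infty$. Let $f,g:\mathbb R^d\to\mathbb R_+$ be measurable, $f$ bounded, such that $f(x)\le b_f(|x|)$ for all $x\in\mathbb R^d$ and $g(x)\ge\alpha$ for all $|x|\le\rho$. Then $$\sup_{x\in\mathbb R^d,\ \eta\in\Gamma}\ \sum_{y\in\eta} f(x-y)\exp\Bigl\{-\sum_{z\in\eta\setminus\{y\}} g(z-y)\Bigr\}<\infty.$$
   Context: $\Gamma$ denotes the set of locally finite subsets $\gamma\subset\mathbb R^d$, i.e. $|\gamma\cap B|<\infty$ for every bounded Borel set $B\subset\mathbb R^d$, where $|\cdot|$ of a finite set is its cardinality; $|x|$ is the Euclidean norm. *)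

theory Defs
  imports "HOL-Analysis.Analysis"
begin

definition Gamma :: "'a::euclidean_space set set" where
  "Gamma = {\<gamma>. \<forall>B. B \<in> sets borel \<longrightarrow> bounded B \<longrightarrow> finite (\<gamma> \<inter> B)}"

text \<open>exp(- sum_{z in eta minus y} g(z-y)), which is 0 when the (nonnegative) sum diverges.\<close>
definition interaction_weight :: "('a::euclidean_space \<Rightarrow> real) \<Rightarrow> 'a set \<Rightarrow> 'a \<Rightarrow> real" where
  "interaction_weight g \<eta> y =
     (if (\<lambda>z. g (z - y)) summable_on (\<eta> - {y})
      then exp (- (\<Sum>\<^sub>\<infinity>z\<in>\<eta> - {y}. g (z - y))) else 0)"

end

theory Submission
  imports Defs
begin

text \<open>
  Let \<open>N(y)\<close> be the number of points of \<open>\<eta>\<close> within distance \<open>\<rho>\<close> of \<open>y\<close>. Since \<open>g \<ge> \<alpha>\<close> on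
  the ball of radius \<open>\<rho>\<close>, the weight of \<open>y\<close> is at most \<open>exp (-\<alpha> (N(y) - 1)) \<le> (1 + 1/\<alpha>) / N(y)\<close>.
  A greedy selection of \<open>\<rho>/2\<close>-separated points shows that \<open>\<Sum> 1/N(y)\<close> over the points of
  \<open>\<eta>\<close> in the annulus \<open>k \<le> |x - y| \<le> k + 1\<close> is at most the number of disjoint balls of
  radius \<open>\<rho>/4\<close> fitting into a slightly thickened annulus, which is \<open>O(k\<^sup>d\<^sup>-\<^sup>1)\<close> by comparing
  volumes. Hence the contribution of the \<open>k\<close>-th annulus is \<open>O(b(k) k\<^sup>d\<^sup>-\<^sup>1)\<close>, and these
  bounds sum to a constant by comparison with \<open>\<integral> b(s) s\<^sup>d\<^sup>-\<^sup>1 ds\<close>, uniformly in \<open>x\<close> and \<open>\<eta>\<close>.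
\<close>

lemma power_diff_le:
  fixes q R :: real
  assumes "0 \<le> q" "q \<le> R"
  shows "R ^ n - q ^ n \<le> real n * (R - q) * R ^ (n - 1)"
proof -
  have "(\<Sum>i<n. q ^ (n - Suc i) * R ^ i) \<le> (\<Sum>i<n. R ^ (n - 1))"
  proof (rule sum_mono)
    fix i assume i: "i \<in> {..<n}"
    have "q ^ (n - Suc i) * R ^ i \<le> R ^ (n - Suc i) * R ^ i"
      using assms by (intro mult_right_mono power_mono) auto
    also have "\<dots> = R ^ (n - 1)" using i by (simp add: power_add[symmetric])
    finally show "q ^ (n - Suc i) * R ^ i \<le> R ^ (n - 1)" .
  qed
  hence "(R - q) * (\<Sum>i<n. q ^ (n - Suc i) * R ^ i) \<le> (R - q) * (\<Sum>i<n. R ^ (n - 1))"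
    using assms by (intro mult_left_mono) auto
  thus ?thesis by (simp add: power_diff_sumr2 mult_ac)
qed

lemma sum_antimono_le_nn_integral:
  fixes b :: "real \<Rightarrow> real"
  assumes anti: "antimono_on {0..} b" and nonneg: "\<And>s. s \<ge> 0 \<Longrightarrow> b s \<ge> 0"
  shows "ennreal (\<Sum>k<m. b (real (Suc k)) * real k ^ n)
           \<le> (\<integral>\<^sup>+ s\<in>{0..}. ennreal (b s * s ^ n) \<partial>lborel)"
proof -
  define c where "c k = b (real (Suc k)) * real k ^ n" for k
  define S where "S k = {real k..<real (Suc k)}" for k
  have c_nonneg: "c k \<ge> 0" for k
    unfolding c_def using nonneg[of "real (Suc k)"] by simp
  have c_le: "c k \<le> b s * s ^ n" if "s \<in> S k" for k s
  proof -
    have "b (real (Suc k)) \<le> b s"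
      using that monotone_onD[OF anti, of s "real (Suc k)"] by (simp add: S_def)
    moreover have "real k ^ n \<le> s ^ n"
      using that by (intro power_mono) (auto simp: S_def)
    ultimately show ?thesis
      unfolding c_def using that nonneg[of "real (Suc k)"] by (intro mult_mono) (auto simp: S_def)
  qed
  have "ennreal (\<Sum>k<m. c k) = (\<Sum>k<m. ennreal (c k) * emeasure lborel (S k))"
    using c_nonneg by (simp add: S_def)
  also have "\<dots> = (\<Sum>k<m. \<integral>\<^sup>+ s. ennreal (c k) * indicator (S k) s \<partial>lborel)"
    by (simp add: nn_integral_cmult_indicator S_def)
  also have "\<dots> = (\<integral>\<^sup>+ s. (\<Sum>k<m. ennreal (c k) * indicator (S k) s) \<partial>lborel)"
    by (rule nn_integral_sum[symmetric]) (simp add: S_def)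
  also have "\<dots> \<le> (\<integral>\<^sup>+ s. ennreal (b s * s ^ n) * indicator {0..} s \<partial>lborel)"
  proof (rule nn_integral_mono)
    fix s :: real
    have unique: "k = nat \<lfloor>s\<rfloor>" if "s \<in> S k" for k
    proof -
      have "\<lfloor>s\<rfloor> = int k" using that by (simp add: S_def floor_eq_iff)
      thus ?thesis by simp
    qed
    have "(\<Sum>k<m. ennreal (c k) * indicator (S k) s)
        = (\<Sum>k<m. if k = nat \<lfloor>s\<rfloor> then ennreal (c k) * indicator (S k) s else 0)"
      by (rule sum.cong) (auto simp: indicator_def dest: unique)
    also have "\<dots> \<le> ennreal (c (nat \<lfloor>s\<rfloor>)) * indicator (S (nat \<lfloor>s\<rfloor>)) s"
      by (simp add: sum.delta)
    also have "\<dots> \<le> ennreal (b s * s ^ n) * indicator {0..} s"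
      using c_le[of s "nat \<lfloor>s\<rfloor>"] by (auto simp: indicator_def S_def ennreal_leI)
    finally show "(\<Sum>k<m. ennreal (c k) * indicator (S k) s)
        \<le> ennreal (b s * s ^ n) * indicator {0..} s" .
  qed
  finally show ?thesis unfolding c_def .
qed

lemma partial_sums_bounded_if_nn_integral_finite:
  fixes b :: "real \<Rightarrow> real" and A :: real
  assumes anti: "antimono_on {0..} b" and nonneg: "\<And>s. s \<ge> 0 \<Longrightarrow> b s \<ge> 0" and "A \<ge> 0"
    and finite_integral: "(\<integral>\<^sup>+ s\<in>{0..}. ennreal (b s * s ^ n) \<partial>lborel) < \<infinity>"
  shows "\<exists>K. \<forall>m. (\<Sum>k<m. b (real k) * (real k + A) ^ n) \<le> K"
proof -
  define t where "t k = b (real k) * (real k + A) ^ n" for k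
  define I where "I = enn2real (\<integral>\<^sup>+ s\<in>{0..}. ennreal (b s * s ^ n) \<partial>lborel)"
  have t_nonneg: "t k \<ge> 0" for k
    unfolding t_def using nonneg[of "real k"] \<open>A \<ge> 0\<close> by simp
  have t_tail: "t (Suc (Suc i)) \<le> (2 + A) ^ n * (b (real (Suc (Suc i))) * real (Suc i) ^ n)" for i
  proof -
    have "real (Suc (Suc i)) + A \<le> (2 + A) * real (Suc i)"
      using \<open>A \<ge> 0\<close> by (simp add: algebra_simps)
    hence "(real (Suc (Suc i)) + A) ^ n \<le> (2 + A) ^ n * real (Suc i) ^ n"
      using \<open>A \<ge> 0\<close> by (metis power_mono power_mult_distrib add_nonneg_nonneg of_nat_0_le_iff)
    hence "t (Suc (Suc i)) \<le> b (real (Suc (Suc i))) * ((2 + A) ^ n * real (Suc i) ^ n)"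
      unfolding t_def using nonneg[of "real (Suc (Suc i))"] by (intro mult_left_mono) auto
    thus ?thesis by (simp only: mult_ac)
  qed
  have partial_le_I: "(\<Sum>i<m. b (real (Suc i)) * real i ^ n) \<le> I" for m
  proof -
    have "ennreal (\<Sum>i<m. b (real (Suc i)) * real i ^ n) \<le> ennreal I"
      using sum_antimono_le_nn_integral[OF anti nonneg] finite_integral by (simp add: I_def)
    moreover have "0 \<le> (\<Sum>i<m. b (real (Suc i)) * real i ^ n)"
      using nonneg by (intro sum_nonneg mult_nonneg_nonneg) auto
    ultimately show ?thesis using enn2real_nonneg[of "\<integral>\<^sup>+ s\<in>{0..}. ennreal (b s * s ^ n) \<partial>lborel"]
      unfolding I_def by (simp add: ennreal_le_iff2) linarith
  qed
  have "(\<Sum>k<m. t k) \<le> t 0 + t 1 + (2 + A) ^ n * I" for m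
  proof -
    have "(\<Sum>k<m. t k) \<le> (\<Sum>k<Suc (Suc m). t k)"
      using t_nonneg by (intro sum_mono2) auto
    also have "\<dots> = t 0 + t 1 + (\<Sum>i<m. t (Suc (Suc i)))"
      by (simp only: sum.lessThan_Suc_shift) simp
    finally have "(\<Sum>k<m. t k) \<le> t 0 + t 1 + (\<Sum>i<m. t (Suc (Suc i)))" .
    moreover have "(\<Sum>i<m. t (Suc (Suc i)))
        \<le> (2 + A) ^ n * (\<Sum>i<m. b (real (Suc (Suc i))) * real (Suc i) ^ n)"
      unfolding sum_distrib_left by (rule sum_mono) (rule t_tail)
    moreover have "(\<Sum>i<m. b (real (Suc (Suc i))) * real (Suc i) ^ n)
        \<le> (\<Sum>i<Suc m. b (real (Suc i)) * real i ^ n)"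
      using nonneg[of 1] by (simp add: sum.lessThan_Suc_shift del: sum.lessThan_Suc)
    ultimately show ?thesis
      using partial_le_I[of "Suc m"] \<open>A \<ge> 0\<close>
      by (smt (verit, best) mult_left_mono zero_le_power)
  qed
  thus ?thesis unfolding t_def by blast
qed

lemma emeasure_UN_separated_balls:
  fixes T :: "'a::euclidean_space set" and r :: real
  assumes "r \<ge> 0" "finite T"
    and separated: "\<And>t t'. t \<in> T \<Longrightarrow> t' \<in> T \<Longrightarrow> t \<noteq> t' \<Longrightarrow> dist t t' \<ge> 2 * r"
  shows "emeasure lborel (\<Union>t\<in>T. ball t r)
           = ennreal (real (card T) * unit_ball_vol (DIM('a)) * r ^ DIM('a))"
proof -
  have "disjoint_family_on (\<lambda>t. ball t r) T"
    unfolding disjoint_family_on_def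
  proof (intro ballI impI equals0I)
    fix t t' z assume "t \<in> T" "t' \<in> T" "t \<noteq> t'" "z \<in> ball t r \<inter> ball t' r"
    moreover have "dist t t' \<le> dist t z + dist t' z" by (simp add: dist_triangle2)
    ultimately show False using separated[of t t'] by auto
  qed
  hence "emeasure lborel (\<Union>t\<in>T. ball t r) = (\<Sum>t\<in>T. emeasure lborel (ball t r))"
    using \<open>finite T\<close> by (intro sum_emeasure[symmetric]) auto
  also have "\<dots> = (\<Sum>t\<in>T. ennreal (unit_ball_vol (DIM('a)) * r ^ DIM('a)))"
    using \<open>r \<ge> 0\<close> by (simp add: emeasure_ball)
  also have "\<dots> = ennreal (real (card T) * unit_ball_vol (DIM('a)) * r ^ DIM('a))"
    using \<open>r \<ge> 0\<close> by (simp add: ennreal_of_nat_eq_real_of_nat ennreal_mult' mult.assoc)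
  finally show ?thesis .
qed

lemma UN_balls_subset_annulus:
  fixes x :: "'a::metric_space" and r k :: real
  assumes annulus: "\<And>t. t \<in> T \<Longrightarrow> k \<le> dist x t \<and> dist x t \<le> k + 1"
  shows "(\<Union>t\<in>T. ball t r) \<subseteq> ball x (k + 1 + r) - ball x (max 0 (k - r))"
proof (intro subsetI, elim UN_E)
  fix z t assume t: "t \<in> T" and "z \<in> ball t r"
  moreover have "dist x t \<le> dist x z + dist t z" "dist x z \<le> dist x t + dist t z"
    by (simp_all add: dist_triangle2 dist_triangle)
  ultimately show "z \<in> ball x (k + 1 + r) - ball x (max 0 (k - r))"
    using annulus[OF t] zero_le_dist[of x z] by (auto simp: max_def)
qed

lemma card_separated_in_annulus_volume_le:
  fixes x :: "'a::euclidean_space" and T :: "'a set" and r k :: real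
  assumes "r > 0" "k \<ge> 0" "finite T"
    and separated: "\<And>t t'. t \<in> T \<Longrightarrow> t' \<in> T \<Longrightarrow> t \<noteq> t' \<Longrightarrow> dist t t' \<ge> 2 * r"
    and annulus: "\<And>t. t \<in> T \<Longrightarrow> k \<le> dist x t \<and> dist x t \<le> k + 1"
  shows "real (card T) * r ^ DIM('a) \<le> (k + 1 + r) ^ DIM('a) - (max 0 (k - r)) ^ DIM('a)"
proof -
  define q where "q = max 0 (k - r)"
  define R where "R = k + 1 + r"
  define v where "v = unit_ball_vol (DIM('a))"
  define U where "U = (\<Union>t\<in>T. ball t r)"
  have "v > 0" "q \<ge> 0" "R \<ge> 0" using assms by (auto simp: v_def q_def R_def)
  have "U \<in> sets borel" unfolding U_def by (intro borel_open open_UN) auto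
  have measure_U: "emeasure lborel U = ennreal (real (card T) * v * r ^ DIM('a))"
    unfolding U_def v_def using \<open>r > 0\<close> \<open>finite T\<close> separated
    by (intro emeasure_UN_separated_balls) auto
  have "U \<subseteq> ball x R - ball x q"
    unfolding U_def q_def R_def using annulus by (rule UN_balls_subset_annulus)
  hence inner_disjoint: "ball x q \<inter> U = {}" and outer: "ball x q \<union> U \<subseteq> ball x R"
    using assms by (auto simp: q_def R_def)
  have "emeasure lborel (ball x q) + emeasure lborel U = emeasure lborel (ball x q \<union> U)"
    using inner_disjoint \<open>U \<in> sets borel\<close> by (intro plus_emeasure) auto
  also have "\<dots> \<le> emeasure lborel (ball x R)"
    by (rule emeasure_mono[OF outer]) auto
  finally have "ennreal (v * q ^ DIM('a)) + ennreal (real (card T) * v * r ^ DIM('a))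
      \<le> ennreal (v * R ^ DIM('a))"
    using \<open>q \<ge> 0\<close> \<open>R \<ge> 0\<close> by (simp add: emeasure_ball measure_U v_def)
  moreover have "v * q ^ DIM('a) \<ge> 0" "real (card T) * v * r ^ DIM('a) \<ge> 0"
    "v * R ^ DIM('a) \<ge> 0"
    using \<open>v > 0\<close> \<open>q \<ge> 0\<close> \<open>R \<ge> 0\<close> \<open>r > 0\<close> by auto
  ultimately have "v * q ^ DIM('a) + real (card T) * v * r ^ DIM('a) \<le> v * R ^ DIM('a)"
    by (metis ennreal_plus ennreal_le_iff)
  hence "v * (real (card T) * r ^ DIM('a)) \<le> v * (R ^ DIM('a) - q ^ DIM('a))"
    by (simp add: algebra_simps)
  thus ?thesis using \<open>v > 0\<close> by (simp add: q_def R_def)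
qed

lemma card_separated_in_annulus_le:
  fixes x :: "'a::euclidean_space" and T :: "'a set" and r k :: real
  assumes "r > 0" "k \<ge> 0" "finite T"
    and "\<And>t t'. t \<in> T \<Longrightarrow> t' \<in> T \<Longrightarrow> t \<noteq> t' \<Longrightarrow> dist t t' \<ge> 2 * r"
    and "\<And>t. t \<in> T \<Longrightarrow> k \<le> dist x t \<and> dist x t \<le> k + 1"
  shows "real (card T) * r ^ DIM('a) \<le> real DIM('a) * (1 + 2 * r) * (k + 1 + r) ^ (DIM('a) - 1)"
proof -
  have "real (card T) * r ^ DIM('a) \<le> (k + 1 + r) ^ DIM('a) - (max 0 (k - r)) ^ DIM('a)"
    by (rule card_separated_in_annulus_volume_le) (use assms in auto)
  also have "\<dots> \<le> real DIM('a) * (k + 1 + r - max 0 (k - r)) * (k + 1 + r) ^ (DIM('a) - 1)"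
    by (rule power_diff_le) (use assms in auto)
  also have "\<dots> \<le> real DIM('a) * (1 + 2 * r) * (k + 1 + r) ^ (DIM('a) - 1)"
    using assms by (intro mult_right_mono mult_left_mono) auto
  finally show ?thesis .
qed

lemma sum_inverse_card_cball_le_one:
  fixes U G :: "'a::metric_space set" and \<rho> :: real
  assumes locally_finite: "\<And>y. y \<in> U \<Longrightarrow> finite (U \<inter> cball y \<rho>)"
    and "G \<subseteq> U" "finite G" and diam: "\<And>y z. y \<in> G \<Longrightarrow> z \<in> G \<Longrightarrow> dist y z \<le> \<rho>"
  shows "(\<Sum>y\<in>G. 1 / real (card (U \<inter> cball y \<rho>))) \<le> 1"
proof (cases "G = {}")
  case False
  have "(\<Sum>y\<in>G. 1 / real (card (U \<inter> cball y \<rho>))) \<le> (\<Sum>y\<in>G. 1 / real (card G))"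
  proof (rule sum_mono)
    fix y assume "y \<in> G"
    hence "G \<subseteq> U \<inter> cball y \<rho>" using \<open>G \<subseteq> U\<close> diam by auto
    hence "card G \<le> card (U \<inter> cball y \<rho>)"
      using \<open>y \<in> G\<close> \<open>G \<subseteq> U\<close> by (intro card_mono locally_finite) auto
    moreover have "card G > 0" using False \<open>finite G\<close> card_gt_0_iff by blast
    ultimately show "1 / real (card (U \<inter> cball y \<rho>)) \<le> 1 / real (card G)"
      by (intro divide_left_mono) auto
  qed
  also have "\<dots> = 1" using False \<open>finite G\<close> by auto
  finally show ?thesis .
qed simp

lemma exists_separated_subset_card_ge:
  fixes U S :: "'a::metric_space set" and \<rho> :: real
  assumes "\<rho> > 0" and locally_finite: "\<And>y. y \<in> U \<Longrightarrow> finite (U \<inter> cball y \<rho>)"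
    and "finite S" "S \<subseteq> U"
  shows "\<exists>T\<subseteq>S. (\<forall>t\<in>T. \<forall>t'\<in>T. t \<noteq> t' \<longrightarrow> dist t t' > \<rho> / 2)
           \<and> (\<Sum>y\<in>S. 1 / real (card (U \<inter> cball y \<rho>))) \<le> real (card T)"
  using \<open>finite S\<close> \<open>S \<subseteq> U\<close>
proof (induction S rule: finite_psubset_induct)
  case (psubset S)
  define N where "N y = real (card (U \<inter> cball y \<rho>))" for y
  show ?case
  proof (cases "S = {}")
    case True thus ?thesis by auto
  next
    case False
    then obtain t where "t \<in> S" by auto
    text \<open>Keep \<open>t\<close> and discard its \<open>\<rho>/2\<close>-neighbourhood \<open>G\<close>, which contributes at most \<open>1\<close>.\<close>
    define G where "G = S \<inter> cball t (\<rho> / 2)"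
    have "t \<in> G" "finite G" using \<open>t \<in> S\<close> \<open>\<rho> > 0\<close> psubset.hyps by (auto simp: G_def)
    hence "S - G \<subset> S" using \<open>t \<in> S\<close> by blast
    moreover have "S - G \<subseteq> U" using psubset.prems by blast
    ultimately have "\<exists>T\<subseteq>S - G. (\<forall>t\<in>T. \<forall>t'\<in>T. t \<noteq> t' \<longrightarrow> dist t t' > \<rho> / 2)
        \<and> (\<Sum>y\<in>S - G. 1 / N y) \<le> real (card T)"
      unfolding N_def by (rule psubset.IH)
    then obtain T where T: "T \<subseteq> S - G" "\<forall>t\<in>T. \<forall>t'\<in>T. t \<noteq> t' \<longrightarrow> dist t t' > \<rho> / 2"
        "(\<Sum>y\<in>S - G. 1 / N y) \<le> real (card T)"
      by blast
    have "finite T" "t \<notin> T"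
      using T(1) \<open>t \<in> G\<close> psubset.hyps finite_subset[of T S] by auto
    have "(\<Sum>y\<in>G. 1 / N y) \<le> 1"
      unfolding N_def
    proof (rule sum_inverse_card_cball_le_one)
      show "dist y z \<le> \<rho>" if "y \<in> G" "z \<in> G" for y z
        using that dist_triangle3[of y z t] by (auto simp: G_def)
    qed (use locally_finite psubset.prems \<open>finite G\<close> in \<open>auto simp: G_def\<close>)
    moreover have "(\<Sum>y\<in>S. 1 / N y) = (\<Sum>y\<in>G. 1 / N y) + (\<Sum>y\<in>S - G. 1 / N y)"
      using psubset.hyps by (subst sum.subset_diff[of G]) (auto simp: G_def)
    ultimately have "(\<Sum>y\<in>S. 1 / N y) \<le> real (card (insert t T))"
      using T(3) \<open>finite T\<close> \<open>t \<notin> T\<close> by simp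
    moreover have "dist t t' > \<rho> / 2" if "t' \<in> T" for t'
      using that T(1) by (auto simp: G_def)
    ultimately show ?thesis
      using T(1,2) \<open>t \<in> S\<close> unfolding N_def
      by (intro exI[of _ "insert t T"]) (auto simp: dist_commute)
  qed
qed

lemma sum_inverse_card_cball_in_annulus_le:
  fixes \<eta> F :: "'a::euclidean_space set" and x :: 'a and \<rho> k :: real
  assumes "\<rho> > 0" "k \<ge> 0" "\<And>y. y \<in> \<eta> \<Longrightarrow> finite (\<eta> \<inter> cball y \<rho>)" "finite F" "F \<subseteq> \<eta>"
    and annulus: "\<And>y. y \<in> F \<Longrightarrow> k \<le> dist x y \<and> dist x y \<le> k + 1"
  shows "(\<Sum>y\<in>F. 1 / real (card (\<eta> \<inter> cball y \<rho>))) * (\<rho> / 4) ^ DIM('a)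
           \<le> real DIM('a) * (1 + \<rho> / 2) * (k + 1 + \<rho> / 4) ^ (DIM('a) - 1)"
proof -
  obtain T where T: "T \<subseteq> F" "\<forall>t\<in>T. \<forall>t'\<in>T. t \<noteq> t' \<longrightarrow> dist t t' > \<rho> / 2"
      "(\<Sum>y\<in>F. 1 / real (card (\<eta> \<inter> cball y \<rho>))) \<le> real (card T)"
    using exists_separated_subset_card_ge[of \<rho> \<eta> F] assms by blast
  have "(\<Sum>y\<in>F. 1 / real (card (\<eta> \<inter> cball y \<rho>))) * (\<rho> / 4) ^ DIM('a)
      \<le> real (card T) * (\<rho> / 4) ^ DIM('a)"
    using T(3) \<open>\<rho> > 0\<close> by (intro mult_right_mono) auto
  also have "\<dots> \<le> real DIM('a) * (1 + 2 * (\<rho> / 4)) * (k + 1 + \<rho> / 4) ^ (DIM('a) - 1)"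
  proof (rule card_separated_in_annulus_le)
    show "finite T" using T(1) \<open>finite F\<close> finite_subset by blast
    show "dist t t' \<ge> 2 * (\<rho> / 4)" if "t \<in> T" "t' \<in> T" "t \<noteq> t'" for t t'
      using T(2) that by fastforce
  qed (use assms T(1) in auto)
  finally show ?thesis by simp
qed

lemma exp_neg_mult_le_divide:
  fixes \<alpha> n :: real
  assumes "\<alpha> > 0" "n \<ge> 1"
  shows "exp (- (\<alpha> * (n - 1))) \<le> (1 + 1 / \<alpha>) / n"
proof -
  define u where "u = \<alpha> * (n - 1)"
  have "u \<ge> 0" using assms by (simp add: u_def)
  have "exp (- u) \<le> 1 / (1 + u)"
    using exp_ge_add_one_self[of u] \<open>u \<ge> 0\<close> by (simp add: exp_minus field_simps)
  also have "\<dots> \<le> (1 + 1 / \<alpha>) / n"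
  proof -
    have "n \<le> (1 + 1 / \<alpha>) * (1 + u)"
    proof -
      have square_le: "\<alpha> * \<alpha> \<le> \<alpha> * (\<alpha> * n)"
        using assms mult_left_mono[of 1 n "\<alpha> * \<alpha>"] by (simp add: mult.assoc)
      show ?thesis using assms by (simp add: u_def field_simps) (use square_le in linarith)
    qed
    thus ?thesis using \<open>u \<ge> 0\<close> assms by (simp add: field_simps)
  qed
  finally show ?thesis unfolding u_def .
qed

lemma interaction_weight_nonneg: "interaction_weight g \<eta> y \<ge> 0"
  unfolding interaction_weight_def by auto

lemma interaction_weight_le_inverse_card:
  fixes g :: "'a::euclidean_space \<Rightarrow> real"
  assumes "\<alpha> > 0" "\<rho> \<ge> 0" "finite (\<eta> \<inter> cball y \<rho>)" "y \<in> \<eta>"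
    and g_nonneg: "\<And>x. g x \<ge> 0" and g_ge: "\<And>x. norm x \<le> \<rho> \<Longrightarrow> g x \<ge> \<alpha>"
  shows "interaction_weight g \<eta> y \<le> (1 + 1 / \<alpha>) / real (card (\<eta> \<inter> cball y \<rho>))"
proof -
  define A where "A = \<eta> \<inter> cball y \<rho>"
  have "y \<in> A" using assms by (simp add: A_def)
  hence card_A: "card (A - {y}) = card A - 1" "card A \<ge> 1"
    using \<open>finite (\<eta> \<inter> cball y \<rho>)\<close> by (auto simp: A_def Suc_le_eq card_gt_0_iff)
  have "interaction_weight g \<eta> y \<le> exp (- (\<alpha> * (real (card A) - 1)))"
  proof (cases "(\<lambda>z. g (z - y)) summable_on (\<eta> - {y})")
    case False thus ?thesis unfolding interaction_weight_def by simp
  next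
    case True
    have "real (card (A - {y})) * \<alpha> \<le> (\<Sum>z\<in>A - {y}. g (z - y))"
    proof (rule sum_bounded_below)
      fix z assume "z \<in> A - {y}"
      thus "\<alpha> \<le> g (z - y)" by (intro g_ge) (auto simp: A_def dist_norm norm_minus_commute)
    qed
    also have "\<dots> \<le> (\<Sum>\<^sub>\<infinity>z\<in>\<eta> - {y}. g (z - y))"
      using True \<open>finite (\<eta> \<inter> cball y \<rho>)\<close> g_nonneg
      by (intro finite_sum_le_infsum) (auto simp: A_def)
    finally show ?thesis
      using True card_A by (simp add: interaction_weight_def of_nat_diff algebra_simps)
  qed
  also have "\<dots> \<le> (1 + 1 / \<alpha>) / real (card A)"
    using card_A \<open>\<alpha> > 0\<close> by (intro exp_neg_mult_le_divide) auto
  finally show ?thesis unfolding A_def .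
qed

lemma Gamma_finite_cball: "\<eta> \<in> Gamma \<Longrightarrow> finite (\<eta> \<inter> cball y r)"
  unfolding Gamma_def by auto

lemma sum_in_annulus_le:
  fixes f g :: "'a::euclidean_space \<Rightarrow> real" and b :: "real \<Rightarrow> real" and \<alpha> \<rho> k :: real
  assumes "\<alpha> > 0" "\<rho> > 0" "k \<ge> 0" "\<eta> \<in> Gamma" "finite F" "F \<subseteq> \<eta>"
    and annulus: "\<And>y. y \<in> F \<Longrightarrow> k \<le> dist x y \<and> dist x y \<le> k + 1"
    and anti: "antimono_on {0..} b" and b_nonneg: "\<And>s. s \<ge> 0 \<Longrightarrow> b s \<ge> 0"
    and f_nonneg: "\<And>x. f x \<ge> 0" and f_le: "\<And>x. f x \<le> b (norm x)"
    and "\<And>x. g x \<ge> 0" "\<And>x. norm x \<le> \<rho> \<Longrightarrow> g x \<ge> \<alpha>"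
  shows "(\<Sum>y\<in>F. f (x - y) * interaction_weight g \<eta> y)
           \<le> (1 + 1 / \<alpha>) * real DIM('a) * (1 + \<rho> / 2) / (\<rho> / 4) ^ DIM('a)
               * b k * (k + 1 + \<rho> / 4) ^ (DIM('a) - 1)"
proof -
  define N where "N y = real (card (\<eta> \<inter> cball y \<rho>))" for y
  have "(\<Sum>y\<in>F. f (x - y) * interaction_weight g \<eta> y) \<le> (\<Sum>y\<in>F. b k * ((1 + 1 / \<alpha>) / N y))"
  proof (rule sum_mono)
    fix y assume "y \<in> F"
    have "f (x - y) \<le> b k"
      using f_le[of "x - y"] monotone_onD[OF anti, of k "norm (x - y)"] annulus[OF \<open>y \<in> F\<close>]
        \<open>k \<ge> 0\<close> by (simp add: dist_norm)
    moreover have "interaction_weight g \<eta> y \<le> (1 + 1 / \<alpha>) / N y"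
      unfolding N_def using \<open>y \<in> F\<close> assms
      by (intro interaction_weight_le_inverse_card Gamma_finite_cball) auto
    ultimately show "f (x - y) * interaction_weight g \<eta> y \<le> b k * ((1 + 1 / \<alpha>) / N y)"
      using f_nonneg[of "x - y"] interaction_weight_nonneg[of g \<eta> y] by (intro mult_mono) auto
  qed
  also have "\<dots> = b k * (1 + 1 / \<alpha>) * (\<Sum>y\<in>F. 1 / N y)"
    by (simp add: sum_distrib_left)
  also have "(\<Sum>y\<in>F. 1 / N y)
      \<le> real DIM('a) * (1 + \<rho> / 2) * (k + 1 + \<rho> / 4) ^ (DIM('a) - 1) / (\<rho> / 4) ^ DIM('a)"
  proof -
    have "(\<Sum>y\<in>F. 1 / N y) * (\<rho> / 4) ^ DIM('a)
        \<le> real DIM('a) * (1 + \<rho> / 2) * (k + 1 + \<rho> / 4) ^ (DIM('a) - 1)"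
      unfolding N_def by (rule sum_inverse_card_cball_in_annulus_le) (use assms Gamma_finite_cball in auto)
    thus ?thesis using \<open>\<rho> > 0\<close> by (simp add: pos_le_divide_eq)
  qed
  hence "b k * (1 + 1 / \<alpha>) * (\<Sum>y\<in>F. 1 / N y) \<le> b k * (1 + 1 / \<alpha>)
      * (real DIM('a) * (1 + \<rho> / 2) * (k + 1 + \<rho> / 4) ^ (DIM('a) - 1) / (\<rho> / 4) ^ DIM('a))"
    using b_nonneg[of k] \<open>k \<ge> 0\<close> \<open>\<alpha> > 0\<close>
    by (intro mult_left_mono) auto
  finally show ?thesis by (simp add: mult_ac)
qed

lemma sum_le_if_annulus_sums_le:
  fixes h :: "'a::metric_space \<Rightarrow> real" and U :: "nat \<Rightarrow> real"
  assumes "finite F" "\<And>k. U k \<ge> 0" and partial_sums: "\<And>m. (\<Sum>k<m. U k) \<le> K"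
    and annuli: "\<And>k G. G \<subseteq> F \<Longrightarrow> (\<And>y. y \<in> G \<Longrightarrow> real k \<le> dist x y \<and> dist x y \<le> real k + 1)
                  \<Longrightarrow> sum h G \<le> U k"
  shows "sum h F \<le> K"
proof -
  define shell where "shell y = nat \<lfloor>dist x y\<rfloor>" for y
  have "sum h F = (\<Sum>k\<in>shell ` F. sum h {y \<in> F. shell y = k})"
    by (rule sum.image_gen[OF \<open>finite F\<close>])
  also have "\<dots> \<le> (\<Sum>k\<in>shell ` F. U k)"
  proof (rule sum_mono, rule annuli)
    fix k y assume "y \<in> {y \<in> F. shell y = k}"
    hence "\<lfloor>dist x y\<rfloor> = int k" by (auto simp: shell_def)
    thus "real k \<le> dist x y \<and> dist x y \<le> real k + 1" by linarith
  qed auto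
  also have "\<dots> \<le> (\<Sum>k<Suc (Max (shell ` F)). U k)"
    using \<open>finite F\<close> assms(2) by (intro sum_mono2) (auto simp: less_Suc_eq_le)
  also have "\<dots> \<le> K" by (rule partial_sums)
  finally show ?thesis .
qed

lemma infsum_ennreal_le_if_finite_sums_le:
  fixes h :: "'b \<Rightarrow> real"
  assumes "\<And>y. y \<in> A \<Longrightarrow> h y \<ge> 0" "\<And>F. finite F \<Longrightarrow> F \<subseteq> A \<Longrightarrow> sum h F \<le> c"
  shows "(\<Sum>\<^sub>\<infinity>y\<in>A. ennreal (h y)) \<le> ennreal c"
proof (rule infsum_le_finite_sums[OF nonneg_summable_on_complete])
  fix F assume "finite F" "F \<subseteq> A"
  hence "(\<Sum>y\<in>F. ennreal (h y)) = ennreal (sum h F)"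
    using assms(1) by (intro sum_ennreal) auto
  also have "\<dots> \<le> ennreal c" using assms(2)[OF \<open>finite F\<close> \<open>F \<subseteq> A\<close>] by (rule ennreal_leI)
  finally show "(\<Sum>y\<in>F. ennreal (h y)) \<le> ennreal c" .
qed auto

theorem lemma3p1:
  fixes f g :: "'a::euclidean_space \<Rightarrow> real" and b :: "real \<Rightarrow> real"
    and \<alpha> \<rho> :: real
  assumes "\<alpha> > 0" and "\<rho> > 0"
    and "\<And>s. s \<ge> 0 \<Longrightarrow> b s > 0"
    and "bounded (b ` {0..})"
    and "antimono_on {0..} b"
    and "(b \<longlongrightarrow> 0) at_top"
    and "(\<integral>\<^sup>+ s\<in>{0..}. ennreal (b s * s ^ (DIM('a) - 1)) \<partial>lborel) < \<infinity>"
    and "f \<in> borel_measurable borel" and "g \<in> borel_measurable borel"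
    and "\<And>x. f x \<ge> 0" and "\<And>x. g x \<ge> 0"
    and "bounded (range f)"
    and "\<And>x. f x \<le> b (norm x)"
    and "\<And>x. norm x \<le> \<rho> \<Longrightarrow> g x \<ge> \<alpha>"
  shows "(SUP (x, \<eta>)\<in>UNIV \<times> Gamma.
            \<Sum>\<^sub>\<infinity>y\<in>\<eta>. ennreal (f (x - y) * interaction_weight g \<eta> y)) < \<infinity>"
proof -
  define C where "C = (1 + 1 / \<alpha>) * real DIM('a) * (1 + \<rho> / 2) / (\<rho> / 4) ^ DIM('a)"
  define U where "U k = C * (b (real k) * (real k + 1 + \<rho> / 4) ^ (DIM('a) - 1))" for k
  have b_nonneg: "b s \<ge> 0" if "s \<ge> 0" for s using assms(3)[OF that] by simp
  have "C \<ge> 0" using assms(1,2) by (simp add: C_def)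
  have U_nonneg: "U k \<ge> 0" for k
    using \<open>C \<ge> 0\<close> assms(2) b_nonneg[of "real k"] by (simp add: U_def)
  obtain K where "\<And>m. (\<Sum>k<m. b (real k) * (real k + (1 + \<rho> / 4)) ^ (DIM('a) - 1)) \<le> K"
    using partial_sums_bounded_if_nn_integral_finite[OF assms(5) b_nonneg _ assms(7)] assms(2)
    by (metis less_imp_le add_nonneg_nonneg divide_nonneg_pos zero_le_one zero_less_numeral)
  hence U_partial_sums: "(\<Sum>k<m. U k) \<le> C * K" for m
    using \<open>C \<ge> 0\<close> by (simp add: U_def add.assoc sum_distrib_left[symmetric] mult_left_mono)
  have "(\<Sum>\<^sub>\<infinity>y\<in>\<eta>. ennreal (f (x - y) * interaction_weight g \<eta> y)) \<le> ennreal (C * K)"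
    if "\<eta> \<in> Gamma" for x \<eta>
  proof (rule infsum_ennreal_le_if_finite_sums_le)
    show "f (x - y) * interaction_weight g \<eta> y \<ge> 0" for y
      using assms(10) interaction_weight_nonneg by (rule mult_nonneg_nonneg)
    show "(\<Sum>y\<in>F. f (x - y) * interaction_weight g \<eta> y) \<le> C * K" if "finite F" "F \<subseteq> \<eta>" for F
      using \<open>finite F\<close> U_nonneg U_partial_sums
    proof (rule sum_le_if_annulus_sums_le)
      show "(\<Sum>y\<in>G. f (x - y) * interaction_weight g \<eta> y) \<le> U k"
        if "G \<subseteq> F" "\<And>y. y \<in> G \<Longrightarrow> real k \<le> dist x y \<and> dist x y \<le> real k + 1" for k G
        unfolding U_def C_def using that \<open>finite F\<close> \<open>F \<subseteq> \<eta>\<close> \<open>\<eta> \<in> Gamma\<close> assms b_nonneg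
        by (subst mult.assoc[symmetric], intro sum_in_annulus_le) (auto intro: finite_subset)
    qed
  qed
  hence "(SUP (x, \<eta>)\<in>UNIV \<times> Gamma.
            \<Sum>\<^sub>\<infinity>y\<in>\<eta>. ennreal (f (x - y) * interaction_weight g \<eta> y)) \<le> ennreal (C * K)"
    by (intro SUP_least) auto
  thus ?thesis using le_less_trans by fastforce
qed

end
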